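(* Suppose the set $\mathcal P_e$ of PNE of the M-FSIG is nonempty, let $\tilde{\mathbf a}\in\arg\min_{\mathbf a\in\mathcal P_e}W(\mathbf a)$ and let $\mathcal S_{\tilde{\mathbf a}}$ be the set of sharing users in $\tilde{\mathbf a}$. Then \[ \frac{\min_{\mathbf a\in\mathcal P_e}W(\mathbf a)}{\max_{\mathbf a\in\{1,\dots,K\}^N}W(\mathbf a)}\ \ge\ \frac{\sum_{n\in\{1,\dots,N\}\setminus\mathcal S_{\tilde{\mathbf a}}}w_n\log_2\!\big(1+\frac{P_n}{N_0}|h_{n,n,(K-M+1)}|^2\big)}{\sum_{n=1}^N w_n\log_2\!\big(1+\frac{P_n}{N_0}|h_{n,n,(K)}|^2\big)}. \]
   Context: $N$ users, $K$ REs, nonzero complex channel gains $h_{n_1,n_2,k}$, powers $P_n>0$, noise $N_0>0$, weights $w_n>0$. Profiles $\mathbf a\in\{1,\dots,K\}^N$; interference $I_k(\mathbf a_{-n})=\sum_{m'\ne n:\,a_{m'}=k}|h_{m',n,k}|^2P_{m'}$; rate $R_n(\mathbf a)=\log_2\!\big(1+\frac{P_n|h_{n,n,a_n}|^2}{N_0+I_{a_n}(\mathbf a_{-n})}\big)$; $W(\mathbf a)=\sum_n w_nR_n(\mathbf a)$. $|h_{n,n,(j)}|$ is the $j$-th smallest of $|h_{n,n,1}|,\dots,|h_{n,n,K}|$. M-FSIG with integer parameter $1\le M\le K$: utility $u_n(\mathbf a)=\log_2\!\big(1+\frac{P_n|h_{n,n,(K-M+1)}|^2}{N_0+I_{a_n}(\mathbf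 a_{-n})}\big)$ if $|h_{n,n,a_n}|\ge|h_{n,n,(K-M+1)}|$, and $0$ otherwise; PNE are profiles where no user can strictly improve his utility unilaterally. A sharing user is a user $n$ such that $a_{m'}=a_n$ for some $m'\neq n$. *)

theory Defs
  imports "HOL-Analysis.Analysis"
begin

text \<open>Users are indexed by 1..N, resource elements (REs) by 1..K.
  A channel gain h n1 n2 k is the gain from user n1 to user n2 on RE k.
  Strategy profiles are extensional functions in {1..N} to {1..K}.\<close>

definition profiles :: "nat \<Rightarrow> nat \<Rightarrow> (nat \<Rightarrow> nat) set" where
  "profiles N K = ({1..N} \<rightarrow>\<^sub>E {1..K})"

definition interf :: "nat \<Rightarrow> (nat \<Rightarrow> nat \<Rightarrow> nat \<Rightarrow> complex) \<Rightarrow> (nat \<Rightarrow> real)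
    \<Rightarrow> (nat \<Rightarrow> nat) \<Rightarrow> nat \<Rightarrow> nat \<Rightarrow> real" where
  "interf N h P a n k = (\<Sum>m\<in>{m\<in>{1..N}. m \<noteq> n \<and> a m = k}. (cmod (h m n k))\<^sup>2 * P m)"

definition rate :: "nat \<Rightarrow> (nat \<Rightarrow> nat \<Rightarrow> nat \<Rightarrow> complex) \<Rightarrow> (nat \<Rightarrow> real) \<Rightarrow> real
    \<Rightarrow> (nat \<Rightarrow> nat) \<Rightarrow> nat \<Rightarrow> real" where
  "rate N h P N0 a n =
     log 2 (1 + P n * (cmod (h n n (a n)))\<^sup>2 / (N0 + interf N h P a n (a n)))"

definition welfare :: "nat \<Rightarrow> (nat \<Rightarrow> nat \<Rightarrow> nat \<Rightarrow> complex) \<Rightarrow> (nat \<Rightarrow> real) \<Rightarrow> real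
    \<Rightarrow> (nat \<Rightarrow> real) \<Rightarrow> (nat \<Rightarrow> nat) \<Rightarrow> real" where
  "welfare N h P N0 w a = (\<Sum>n\<in>{1..N}. w n * rate N h P N0 a n)"

definition ordgain :: "nat \<Rightarrow> (nat \<Rightarrow> nat \<Rightarrow> nat \<Rightarrow> complex) \<Rightarrow> nat \<Rightarrow> nat \<Rightarrow> real" where
  "ordgain K h n j = sort (map (\<lambda>k. cmod (h n n k)) [1..<K+1]) ! (j - 1)"

definition util :: "nat \<Rightarrow> nat \<Rightarrow> nat \<Rightarrow> (nat \<Rightarrow> nat \<Rightarrow> nat \<Rightarrow> complex) \<Rightarrow> (nat \<Rightarrow> real)
    \<Rightarrow> real \<Rightarrow> (nat \<Rightarrow> nat) \<Rightarrow> nat \<Rightarrow> real" where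
  "util N K M h P N0 a n =
     (if cmod (h n n (a n)) \<ge> ordgain K h n (K - M + 1)
      then log 2 (1 + P n * (ordgain K h n (K - M + 1))\<^sup>2 / (N0 + interf N h P a n (a n)))
      else 0)"

definition PNE :: "nat \<Rightarrow> nat \<Rightarrow> nat \<Rightarrow> (nat \<Rightarrow> nat \<Rightarrow> nat \<Rightarrow> complex) \<Rightarrow> (nat \<Rightarrow> real)
    \<Rightarrow> real \<Rightarrow> (nat \<Rightarrow> nat) set" where
  "PNE N K M h P N0 = {a \<in> profiles N K. \<forall>n\<in>{1..N}. \<forall>k\<in>{1..K}.
      util N K M h P N0 (a(n := k)) n \<le> util N K M h P N0 a n}"

definition sharing_users :: "nat \<Rightarrow> (nat \<Rightarrow> nat) \<Rightarrow> nat set" where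
  "sharing_users N a = {n \<in> {1..N}. \<exists>m\<in>{1..N}. m \<noteq> n \<and> a m = a n}"

end

theory Submission
  imports Defs
begin

text \<open>A user who gets zero utility in an equilibrium could switch to the RE realising his
  (K - M + 1)-th smallest gain and get positive utility; hence in every PNE each user's own
  gain is at least that order statistic. A user who shares no RE suffers no interference, so
  in the worst equilibrium the non-sharing users alone already earn the numerator. Dropping
  interference and raising every gain to the largest one bounds every welfare value, in
  particular the maximal one, by the denominator.\<close>

lemma ordgain_in_gains:
  assumes "1 \<le> j" "j \<le> K"
  shows "\<exists>k\<in>{1..K}. ordgain K h n j = cmod (h n n k)"
proof -
  let ?xs = "map (\<lambda>k. cmod (h n n k)) [1..<K+1]"
  have "sort ?xs ! (j - 1) \<in> set (sort ?xs)"
    using assms by (intro nth_mem) simp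
  then show ?thesis unfolding ordgain_def by auto
qed

lemma ordgain_pos:
  assumes "1 \<le> j" "j \<le> K" "\<And>k. k \<in> {1..K} \<Longrightarrow> h n n k \<noteq> 0"
  shows "ordgain K h n j > 0"
  using ordgain_in_gains[OF assms(1,2), of h n] assms(3) by auto

lemma gain_le_ordgain_top:
  assumes "k \<in> {1..K}"
  shows "cmod (h n n k) \<le> ordgain K h n K"
proof -
  let ?ys = "sort (map (\<lambda>k. cmod (h n n k)) [1..<K+1])"
  have "k \<in> set [1..<K+1]" using assms by auto
  then have "cmod (h n n k) \<in> set ?ys" unfolding set_sort set_map by (rule imageI)
  then obtain i where i: "i < length ?ys" "?ys ! i = cmod (h n n k)"
    unfolding in_set_conv_nth by blast
  moreover have "length ?ys = K" by simp
  ultimately have "?ys ! i \<le> ?ys ! (K - 1)"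
    by (intro sorted_nth_mono) auto
  then show ?thesis using i unfolding ordgain_def by simp
qed

lemma interf_nonneg:
  assumes "\<And>m. m \<in> {1..N} \<Longrightarrow> P m \<ge> 0"
  shows "interf N h P a n k \<ge> 0"
  unfolding interf_def using assms by (intro sum_nonneg) auto

lemma interf_nonsharing:
  assumes "n \<in> {1..N} - sharing_users N a"
  shows "interf N h P a n (a n) = 0"
proof -
  have "{m \<in> {1..N}. m \<noteq> n \<and> a m = a n} = {}"
    using assms unfolding sharing_users_def by auto
  then show ?thesis unfolding interf_def by (simp only: sum.empty)
qed

lemma log2_one_plus_mono:
  fixes x y :: real
  assumes "0 \<le> x" "x \<le> y"
  shows "log 2 (1 + x) \<le> log 2 (1 + y)"
  using assms by simp

lemma rate_pos:
  assumes "N0 > 0" "P n > 0" "interf N h P a n (a n) \<ge> 0" "h n n (a n) \<noteq> 0"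
  shows "rate N h P N0 a n > 0"
proof -
  have "P n * (cmod (h n n (a n)))\<^sup>2 / (N0 + interf N h P a n (a n)) > 0"
    using assms by simp
  then show ?thesis unfolding rate_def by simp
qed

lemma rate_le_interference_free:
  assumes "N0 > 0" "P n \<ge> 0" "interf N h P a n (a n) \<ge> 0" "cmod (h n n (a n)) \<le> G"
  shows "rate N h P N0 a n \<le> log 2 (1 + P n / N0 * G\<^sup>2)"
proof -
  let ?I = "interf N h P a n (a n)" and ?c = "cmod (h n n (a n))"
  have "P n * ?c\<^sup>2 / (N0 + ?I) \<le> P n * ?c\<^sup>2 / N0"
    using assms by (intro divide_left_mono) auto
  also have "\<dots> \<le> P n / N0 * G\<^sup>2"
    using assms power_mono[OF assms(4) norm_ge_zero, of 2]
    by (simp add: divide_right_mono mult_left_mono)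
  finally show ?thesis
    unfolding rate_def using assms by (intro log2_one_plus_mono) auto
qed

lemma rate_ge_interference_free:
  assumes "N0 > 0" "P n \<ge> 0" "interf N h P a n (a n) = 0"
    and "0 \<le> g" "g \<le> cmod (h n n (a n))"
  shows "log 2 (1 + P n / N0 * g\<^sup>2) \<le> rate N h P N0 a n"
proof -
  have "P n / N0 * g\<^sup>2 \<le> P n * (cmod (h n n (a n)))\<^sup>2 / N0"
    using assms power_mono[OF assms(5,4), of 2]
    by (simp add: divide_right_mono mult_left_mono)
  then show ?thesis
    unfolding rate_def using assms by (intro log2_one_plus_mono) auto
qed

lemma PNE_gain_ge_ordgain:
  assumes "1 \<le> M" "M \<le> K" "N0 > 0"
    and "\<And>m. m \<in> {1..N} \<Longrightarrow> P m > 0"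
    and "\<And>k. k \<in> {1..K} \<Longrightarrow> h n n k \<noteq> 0"
    and "a \<in> PNE N K M h P N0" "n \<in> {1..N}"
  shows "ordgain K h n (K - M + 1) \<le> cmod (h n n (a n))"
proof (rule ccontr)
  let ?g = "ordgain K h n (K - M + 1)"
  assume low: "\<not> ?g \<le> cmod (h n n (a n))"
  have j: "1 \<le> K - M + 1" "K - M + 1 \<le> K" using assms(1,2) by auto
  obtain k where k: "k \<in> {1..K}" "?g = cmod (h n n k)"
    using ordgain_in_gains[OF j] by blast
  have "0 \<le> interf N h P (a(n := k)) n k"
    using assms(4) by (intro interf_nonneg) (simp add: less_imp_le)
  moreover have "?g > 0" using j assms(5) by (rule ordgain_pos)
  ultimately have "P n * ?g\<^sup>2 / (N0 + interf N h P (a(n := k)) n k) > 0"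
    using assms(3,4,7) by simp
  then have "util N K M h P N0 (a(n := k)) n > 0"
    using k unfolding util_def by simp
  moreover have "util N K M h P N0 (a(n := k)) n \<le> util N K M h P N0 a n"
    using assms(6,7) k(1) unfolding PNE_def by auto
  moreover have "util N K M h P N0 a n = 0"
    using low unfolding util_def by simp
  ultimately show False by simp
qed

lemma welfare_le_interference_free:
  assumes "N0 > 0" "\<And>m. m \<in> {1..N} \<Longrightarrow> P m \<ge> 0" "\<And>m. m \<in> {1..N} \<Longrightarrow> w m \<ge> 0"
    and "a \<in> profiles N K"
  shows "welfare N h P N0 w a \<le> (\<Sum>n\<in>{1..N}. w n * log 2 (1 + P n / N0 * (ordgain K h n K)\<^sup>2))"
  unfolding welfare_def
proof (intro sum_mono mult_left_mono)
  fix n assume n: "n \<in> {1..N}"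
  have "a n \<in> {1..K}" using assms(4) n unfolding profiles_def by auto
  then show "rate N h P N0 a n \<le> log 2 (1 + P n / N0 * (ordgain K h n K)\<^sup>2)"
    using assms(1,2) n by (intro rate_le_interference_free interf_nonneg gain_le_ordgain_top) auto
qed (use assms(3) in auto)

lemma PNE_welfare_ge_nonsharing:
  assumes "1 \<le> M" "M \<le> K" "N0 > 0"
    and "\<And>n k. n \<in> {1..N} \<Longrightarrow> k \<in> {1..K} \<Longrightarrow> h n n k \<noteq> 0"
    and "\<And>m. m \<in> {1..N} \<Longrightarrow> P m > 0" "\<And>m. m \<in> {1..N} \<Longrightarrow> w m \<ge> 0"
    and "a \<in> PNE N K M h P N0"
  shows "(\<Sum>n\<in>{1..N} - sharing_users N a.
             w n * log 2 (1 + P n / N0 * (ordgain K h n (K - M + 1))\<^sup>2))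
         \<le> welfare N h P N0 w a"
proof -
  have a: "a n \<in> {1..K}" if "n \<in> {1..N}" for n
    using assms(7) that unfolding PNE_def profiles_def by auto
  have I: "interf N h P a n (a n) \<ge> 0" for n
    using assms(5) by (intro interf_nonneg) (simp add: less_imp_le)
  have j: "1 \<le> K - M + 1" "K - M + 1 \<le> K" using assms(1,2) by auto
  have "(\<Sum>n\<in>{1..N} - sharing_users N a.
             w n * log 2 (1 + P n / N0 * (ordgain K h n (K - M + 1))\<^sup>2))
        \<le> (\<Sum>n\<in>{1..N} - sharing_users N a. w n * rate N h P N0 a n)"
  proof (intro sum_mono mult_left_mono)
    fix n assume n: "n \<in> {1..N} - sharing_users N a"
    then have n1: "n \<in> {1..N}" by simp
    show "log 2 (1 + P n / N0 * (ordgain K h n (K - M + 1))\<^sup>2) \<le> rate N h P N0 a n"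
      using assms n1 n interf_nonsharing[OF n] ordgain_pos[OF j, of h n]
      by (intro rate_ge_interference_free PNE_gain_ge_ordgain[where N = N]) (auto intro: less_imp_le)
    show "0 \<le> w n" using assms(6) n1 by simp
  qed
  also have "\<dots> \<le> welfare N h P N0 w a"
    unfolding welfare_def
  proof (rule sum_mono2)
    fix n assume "n \<in> {1..N} - ({1..N} - sharing_users N a)"
    then have n: "n \<in> {1..N}" by simp
    have "rate N h P N0 a n > 0"
      using a[OF n] assms(3-5) n I by (intro rate_pos) auto
    then show "0 \<le> w n * rate N h P N0 a n" using assms(6) n by simp
  qed auto
  finally show ?thesis .
qed

lemma welfare_pos:
  assumes "N \<ge> 1" "N0 > 0"
    and "\<And>n k. n \<in> {1..N} \<Longrightarrow> k \<in> {1..K} \<Longrightarrow> h n n k \<noteq> 0"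
    and "\<And>m. m \<in> {1..N} \<Longrightarrow> P m > 0" "\<And>m. m \<in> {1..N} \<Longrightarrow> w m > 0"
    and "a \<in> profiles N K"
  shows "welfare N h P N0 w a > 0"
  unfolding welfare_def
proof (intro sum_pos mult_pos_pos rate_pos)
  fix n assume n: "n \<in> {1..N}"
  have "a n \<in> {1..K}" using assms(6) n unfolding profiles_def by auto
  then show "h n n (a n) \<noteq> 0" using assms(3) n by simp
  show "interf N h P a n (a n) \<ge> 0"
    using assms(4) by (intro interf_nonneg) (simp add: less_imp_le)
qed (use assms in auto)

theorem mainTheorem6:
  fixes N K M :: nat
    and h :: "nat \<Rightarrow> nat \<Rightarrow> nat \<Rightarrow> complex"
    and P w :: "nat \<Rightarrow> real" and N0 :: real
    and atil :: "nat \<Rightarrow> nat"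
  assumes "N \<ge> 1" and "K \<ge> 1" and "1 \<le> M" and "M \<le> K"
    and "\<And>n1 n2 k. n1 \<in> {1..N} \<Longrightarrow> n2 \<in> {1..N} \<Longrightarrow> k \<in> {1..K} \<Longrightarrow> h n1 n2 k \<noteq> 0"
    and "\<And>n. n \<in> {1..N} \<Longrightarrow> P n > 0"
    and "N0 > 0"
    and "\<And>n. n \<in> {1..N} \<Longrightarrow> w n > 0"
    and "PNE N K M h P N0 \<noteq> {}"
    and "atil \<in> PNE N K M h P N0"
    and "\<And>a. a \<in> PNE N K M h P N0 \<Longrightarrow> welfare N h P N0 w atil \<le> welfare N h P N0 w a"
  shows "(Min (welfare N h P N0 w ` PNE N K M h P N0))
           / (Max (welfare N h P N0 w ` profiles N K))
         \<ge> (\<Sum>n\<in>{1..N} - sharing_users N atil.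
               w n * log 2 (1 + P n / N0 * (ordgain K h n (K - M + 1))\<^sup>2))
           / (\<Sum>n\<in>{1..N}. w n * log 2 (1 + P n / N0 * (ordgain K h n K)\<^sup>2))"
    (is "?Min / ?Max \<ge> ?Num / ?D")
proof -
  let ?W = "welfare N h P N0 w atil"
  have fin: "finite (profiles N K)" unfolding profiles_def by (simp add: finite_PiE)
  have PNE_sub: "PNE N K M h P N0 \<subseteq> profiles N K" unfolding PNE_def by auto
  have atil: "atil \<in> profiles N K" using assms(10) PNE_sub by auto
  have P_nonneg: "P n \<ge> 0" and w_nonneg: "w n \<ge> 0" if "n \<in> {1..N}" for n
    using assms(6,8) that by (auto intro: less_imp_le)
  have Min_eq: "?Min = ?W"
    using assms(10,11) finite_subset[OF PNE_sub fin] by (intro Min_eqI) auto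
  have Num_le: "?Num \<le> ?W"
    using assms w_nonneg by (intro PNE_welfare_ge_nonsharing) auto
  have Max_le: "?Max \<le> ?D"
  proof (intro Max.boundedI)
    show "x \<le> ?D" if "x \<in> welfare N h P N0 w ` profiles N K" for x
      using that assms(7) P_nonneg w_nonneg welfare_le_interference_free[where N = N and K = K]
      by blast
  qed (use fin atil in auto)
  have W_le: "?W \<le> ?Max" using fin atil by (intro Max_ge) auto
  have W_pos: "0 < ?W" using assms(1,5-8) atil by (intro welfare_pos) auto
  have "?Num / ?D \<le> ?W / ?D"
    using Num_le W_pos W_le Max_le by (intro divide_right_mono) auto
  also have "\<dots> \<le> ?W / ?Max"
    using W_pos W_le Max_le by (intro divide_left_mono) auto
  finally show ?thesis unfolding Min_eq .
qed

end
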